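(* Let $\phi=\tilde p/p$ be an irreducible rational inner function on $\mathbb{D}^3$ of degree $(m,n,1)$ with $p(z)=p_1(z_1,z_2)+z_3p_2(z_1,z_2)$. Then there are at most finitely many $(\zeta_1,\zeta_2)\in\mathbb{T}^2$ such that $\mathcal{Z}_p\cap\mathbb{T}^3$ contains the vertical line $\{(\zeta_1,\zeta_2)\}\times\mathbb{T}$.
   Context: A rational inner function (RIF) on $\mathbb{D}^3$ is a rational function holomorphic on the tridisk with unimodular radial limits a.e. on $\mathbb{T}^3$; it is written $\phi=\tilde p/p$ with $p$ zero-free on $\mathbb{D}^3$, $p,\tilde p$ without common factors, $\tilde p(z)=z_1^mz_2^nz_3\overline{p(1/\bar z_1,1/\bar z_2,1/\bar z_3)}$ for degree $(m,n,1)$. Irreducibility gives that $p_1$ and $p_2$ share no common factors. $\mathcal{Z}_p$ is the zero set of $p$. *)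

theory Defs
  imports "HOL-Analysis.Analysis" "HOL-Computational_Algebra.Polynomial_Factorial"
begin

text \<open>Polynomials in three variables (z1,z2,z3) are represented as
  complex poly poly poly: the outer variable is z3, the middle one z2,
  the innermost one z1.\<close>

type_synonym poly3 = "complex poly poly poly"

definition eval2 :: "complex poly poly \<Rightarrow> complex \<Rightarrow> complex \<Rightarrow> complex" where
  "eval2 q z1 z2 = poly (map_poly (\<lambda>a. poly a z1) q) z2"

definition eval3 :: "poly3 \<Rightarrow> complex \<Rightarrow> complex \<Rightarrow> complex \<Rightarrow> complex" where
  "eval3 P z1 z2 z3 = poly (map_poly (\<lambda>q. eval2 q z1 z2) P) z3"

definition has_multidegree :: "poly3 \<Rightarrow> nat \<Rightarrow> nat \<Rightarrow> nat \<Rightarrow> bool" where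
  "has_multidegree P m n l \<longleftrightarrow>
     degree P = l \<and>
     (\<forall>k. degree (coeff P k) \<le> n) \<and> (\<exists>k. degree (coeff P k) = n) \<and>
     (\<forall>k j. degree (coeff (coeff P k) j) \<le> m) \<and> (\<exists>k j. degree (coeff (coeff P k) j) = m)"

text \<open>Reflection: refl3 m n l P (z) = z1^m z2^n z3^l conj(P(1/conj z1, 1/conj z2, 1/conj z3)).\<close>
definition refl3 :: "nat \<Rightarrow> nat \<Rightarrow> nat \<Rightarrow> poly3 \<Rightarrow> poly3" where
  "refl3 m n l P = (\<Sum>k\<le>l. monom (\<Sum>j\<le>n. monom (\<Sum>i\<le>m.
      monom (cnj (coeff (coeff (coeff P (l - k)) (n - j)) (m - i))) i) j) k)"

end

theory Submission
  imports Defs "HOL-Computational_Algebra.Field_as_Ring"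
begin

text \<open>
  Since \<open>P\<close> has degree 1 in \<open>z\<^sub>3\<close>, write \<open>P = p\<^sub>1 + z\<^sub>3 p\<^sub>2\<close>. The vertical line over
  \<open>(\<zeta>\<^sub>1, \<zeta>\<^sub>2)\<close> lies in the zero set of \<open>P\<close> only if \<open>p\<^sub>1\<close> and \<open>p\<^sub>2\<close> both vanish at
  \<open>(\<zeta>\<^sub>1, \<zeta>\<^sub>2)\<close> (take \<open>\<zeta>\<^sub>3 = \<plusminus>1\<close>). Irreducibility of \<open>P\<close> makes \<open>p\<^sub>1\<close> and \<open>p\<^sub>2\<close> coprime in
  \<open>\<complex>[z\<^sub>1][z\<^sub>2]\<close>. Clearing denominators in a Bezout identity over \<open>\<complex>(z\<^sub>1)[z\<^sub>2]\<close> gives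
  \<open>u p\<^sub>1 + v p\<^sub>2 = r(z\<^sub>1)\<close> with \<open>r \<noteq> 0\<close>, so a common zero has its first coordinate among
  the finitely many roots of \<open>r\<close>; over each such point \<open>p\<^sub>1\<close> and \<open>p\<^sub>2\<close> do not both
  vanish identically in \<open>z\<^sub>2\<close>, leaving finitely many second coordinates.
\<close>

text \<open>As \<open>Field_as_Ring\<close> does for \<open>rat\<close>, \<open>real\<close> and \<open>complex\<close>: this makes gcds and
  Bezout coefficients available in \<open>'a fract poly\<close>.\<close>

instantiation fract :: (idom)
  "{unique_euclidean_ring, normalization_euclidean_semiring, normalization_semidom_multiplicative}"
begin
definition [simp]: "normalize_fract = (normalize_field :: 'a fract \<Rightarrow> _)"
definition [simp]: "unit_factor_fract = (unit_factor_field :: 'a fract \<Rightarrow> _)"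
definition [simp]: "modulo_fract = (mod_field :: 'a fract \<Rightarrow> _)"
definition [simp]: "euclidean_size_fract = (euclidean_size_field :: 'a fract \<Rightarrow> _)"
definition [simp]: "division_segment (x :: 'a fract) = 1"
instance
  by standard (simp_all add: dvd_field_iff field_split_simps split: if_splits)
end

instantiation fract :: (idom) euclidean_ring_gcd
begin
definition gcd_fract :: "'a fract \<Rightarrow> 'a fract \<Rightarrow> 'a fract" where
  "gcd_fract = Euclidean_Algorithm.gcd"
definition lcm_fract :: "'a fract \<Rightarrow> 'a fract \<Rightarrow> 'a fract" where
  "lcm_fract = Euclidean_Algorithm.lcm"
definition Gcd_fract :: "'a fract set \<Rightarrow> 'a fract" where
  "Gcd_fract = Euclidean_Algorithm.Gcd"
definition Lcm_fract :: "'a fract set \<Rightarrow> 'a fract" where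
  "Lcm_fract = Euclidean_Algorithm.Lcm"
instance
  by standard (simp_all add: gcd_fract_def lcm_fract_def Gcd_fract_def Lcm_fract_def)
end

instance fract :: (idom) field_gcd ..

lemma fract_poly_clear_denominators:
  fixes u :: "'a :: {factorial_ring_gcd, semiring_gcd_mult_normalize} fract poly"
  obtains b u' where "b \<noteq> 0" "smult (to_fract b) u = fract_poly u'"
proof -
  obtain c u' where u: "u = smult c (fract_poly u')"
    by (rule content_decompose_fract)
  obtain a b where c: "c = Fract a b" and "b \<noteq> 0"
    by (rule Fract_cases)
  then have "to_fract b * c = to_fract a"
    by (simp add: Fract_conv_to_fract)
  then have "smult (to_fract b) u = fract_poly (smult a u')"
    by (simp add: u)
  with \<open>b \<noteq> 0\<close> show thesis
    by (rule that)
qed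

lemma coprime_fract_poly:
  fixes p q :: "'a :: {factorial_ring_gcd, semiring_gcd_mult_normalize} poly"
  assumes "coprime p q"
  shows "coprime (fract_poly p) (fract_poly q)"
proof (rule coprimeI)
  fix d
  assume dp: "d dvd fract_poly p" and dq: "d dvd fract_poly q"
  obtain c d' where d: "d = [:c:] * fract_poly d'" and "content d' = 1"
    by (rule content_decompose_fract) simp
  have "fract_poly d' dvd d"
    unfolding d by (rule dvd_triv_right)
  then have "d' dvd p" "d' dvd q"
    using dp dq fract_poly_dvdD[OF _ \<open>content d' = 1\<close>] dvd_trans by blast+
  with assms have "is_unit (fract_poly d')"
    by (meson coprime_common_divisor fract_poly_is_unit)
  moreover have "c \<noteq> 0"
  proof
    assume "c = 0"
    then have "p = 0" "q = 0"
      using dp dq by (simp_all add: d)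
    with assms show False
      by simp
  qed
  ultimately show "is_unit d"
    unfolding d by (intro unit_prod) (simp_all add: is_unit_const_poly_iff dvd_field_iff)
qed

lemma coprime_poly_bezout_const:
  fixes p q :: "'a :: {factorial_ring_gcd, semiring_gcd_mult_normalize} poly"
  assumes "coprime p q"
  obtains u v r where "u * p + v * q = [:r:]" "r \<noteq> 0"
proof -
  obtain u v where uv: "u * fract_poly p + v * fract_poly q = 1"
    using bezout_coefficients_fst_snd[of "fract_poly p" "fract_poly q"]
      coprime_fract_poly[OF assms] by (metis coprime_imp_gcd_eq_1)
  obtain a u' where "a \<noteq> 0" and u': "smult (to_fract a) u = fract_poly u'"
    by (rule fract_poly_clear_denominators)
  obtain b v' where "b \<noteq> 0" and v': "smult (to_fract b) v = fract_poly v'"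
    by (rule fract_poly_clear_denominators)
  have "fract_poly (smult b u' * p + smult a v' * q)
          = smult (to_fract (a * b)) (u * fract_poly p + v * fract_poly q)"
    by (simp flip: u' v' add: smult_add_right ac_simps)
  also have "\<dots> = fract_poly [:a * b:]"
    by (simp add: uv map_poly_pCons)
  finally have "smult b u' * p + smult a v' * q = [:a * b:]"
    by (simp only: fract_poly_eq_iff)
  then show thesis
    by (rule that) (simp add: \<open>a \<noteq> 0\<close> \<open>b \<noteq> 0\<close>)
qed

lemma const_linear_dvd_if_map_poly_eval_eq_0:
  fixes q :: "'a :: {factorial_ring_gcd, semiring_gcd_mult_normalize} poly poly"
  assumes "map_poly (\<lambda>a. poly a x) q = 0"
  shows "[:[:-x, 1:]:] dvd q"
proof -
  have "poly (coeff q i) x = 0" for i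
    using arg_cong[OF assms, of "\<lambda>p. coeff p i"] by (simp add: coeff_map_poly)
  then have "[:-x, 1:] dvd coeff q i" for i
    by (simp add: poly_eq_0_iff_dvd)
  then have "[:-x, 1:] dvd content q"
    unfolding content_def dvd_gcd_list_iff by (auto simp: coeffs_def)
  then show ?thesis
    by (simp add: const_poly_dvd_iff_dvd_content)
qed

lemma coprime_imp_map_poly_eval_ne_0:
  fixes p q :: "'a :: {factorial_ring_gcd, semiring_gcd_mult_normalize, field} poly poly"
  assumes "coprime p q"
  shows "map_poly (\<lambda>a. poly a x) p \<noteq> 0 \<or> map_poly (\<lambda>a. poly a x) q \<noteq> 0"
proof (rule ccontr)
  assume "\<not> ?thesis"
  then have "is_unit [:[:-x, 1:]:]"
    using assms const_linear_dvd_if_map_poly_eval_eq_0 coprime_common_divisor by blast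
  then have "is_unit [:-x, 1 :: 'a:]"
    by (simp add: is_unit_const_poly_iff)
  then show False
    by (simp add: is_unit_iff_degree)
qed

lemma eval2_eq_poly_poly: "eval2 q x y = poly (poly q [:y:]) x"
  unfolding eval2_def by (induction q) (simp_all add: map_poly_pCons)

lemma finite_common_zeros_coprime:
  fixes p q :: "complex poly poly"
  assumes "coprime p q"
  shows "finite {(x, y). eval2 p x y = 0 \<and> eval2 q x y = 0}"
proof -
  obtain u v r where bezout: "u * p + v * q = [:r:]" and "r \<noteq> 0"
    using coprime_poly_bezout_const[OF assms] .
  define S where "S = {x. poly r x = 0}"
  define T where "T x = {y. eval2 p x y = 0 \<and> eval2 q x y = 0}" for x
  have "finite S"
    unfolding S_def using \<open>r \<noteq> 0\<close> by (rule poly_roots_finite)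
  moreover have "finite (T x)" for x
  proof -
    let ?px = "map_poly (\<lambda>a. poly a x) p" and ?qx = "map_poly (\<lambda>a. poly a x) q"
    have "finite {y. poly ?px y = 0} \<or> finite {y. poly ?qx y = 0}"
      using coprime_imp_map_poly_eval_ne_0[OF assms, of x] poly_roots_finite by blast
    moreover have "T x \<subseteq> {y. poly ?px y = 0}" "T x \<subseteq> {y. poly ?qx y = 0}"
      unfolding T_def eval2_def by auto
    ultimately show ?thesis
      using finite_subset by blast
  qed
  moreover have "x \<in> S" if "eval2 p x y = 0" "eval2 q x y = 0" for x y
  proof -
    have "poly r x = eval2 (u * p + v * q) x y"
      by (simp add: bezout eval2_eq_poly_poly)
    with that show ?thesis
      by (simp add: S_def eval2_eq_poly_poly)
  qed
  then have "{(x, y). eval2 p x y = 0 \<and> eval2 q x y = 0} \<subseteq> Sigma S T"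
    by (auto simp: T_def)
  ultimately show ?thesis
    by (meson finite_SigmaI finite_subset)
qed

lemma irreducible_linear_poly_imp_coprime:
  fixes a b :: "'a :: {idom_divide, algebraic_semidom}"
  assumes "irreducible [:a, b:]" and "b \<noteq> 0"
  shows "coprime a b"
proof (rule coprimeI)
  fix c
  assume "c dvd a" "c dvd b"
  then obtain a' b' where a: "a = c * a'" and b: "b = c * b'"
    by blast
  then have factor: "[:a, b:] = [:c:] * [:a', b':]"
    by simp
  have "\<not> is_unit [:a', b':]"
  proof
    assume "is_unit [:a', b':]"
    then have "degree [:a', b':] = 0"
      by (metis is_unit_polyE degree_pCons_0)
    then have "b' = 0"
      by (cases "b' = 0") auto
    with b \<open>b \<noteq> 0\<close> show False
      by simp
  qed
  with irreducibleD[OF assms(1) factor] show "is_unit c"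
    by (simp add: is_unit_const_poly_iff)
qed

lemma eval3_linear: "eval3 [:a, b:] x y z = eval2 a x y + z * eval2 b x y"
  unfolding eval3_def by (simp add: map_poly_pCons eval2_def)

lemma vertical_line_in_zeros_imp_common_zero:
  assumes "\<forall>z. norm z = 1 \<longrightarrow> eval3 [:a, b:] x y z = 0"
  shows "eval2 a x y = 0 \<and> eval2 b x y = 0"
proof -
  have sum: "eval2 a x y + eval2 b x y = 0" and diff: "eval2 a x y - eval2 b x y = 0"
    using assms[rule_format, of 1] assms[rule_format, of "-1"] by (simp_all add: eval3_linear)
  from diff have "eval2 a x y = eval2 b x y"
    by simp
  with sum have "2 * eval2 b x y = 0"
    by simp
  with \<open>eval2 a x y = eval2 b x y\<close> show ?thesis
    by simp
qed

theorem lemma3p4: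
  fixes P :: poly3 and m n :: nat
  assumes deg: "has_multidegree P m n 1"
    and zero_free: "\<And>z1 z2 z3. norm z1 < 1 \<Longrightarrow> norm z2 < 1 \<Longrightarrow> norm z3 < 1 \<Longrightarrow>
                      eval3 P z1 z2 z3 \<noteq> 0"
    and no_common: "coprime P (refl3 m n 1 P)"
    and irred: "irreducible P"
  shows "finite {(\<zeta>1, \<zeta>2). norm \<zeta>1 = 1 \<and> norm \<zeta>2 = 1 \<and>
                   (\<forall>\<zeta>3. norm \<zeta>3 = 1 \<longrightarrow> eval3 P \<zeta>1 \<zeta>2 \<zeta>3 = 0)}"
proof -
  have "degree P = 1"
    using deg by (simp add: has_multidegree_def)
  then obtain p1 p2 where P: "P = [:p1, p2:]" and "p2 \<noteq> 0"
    by (rule degree1_coeffs)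
  have "coprime p1 p2"
    using irred \<open>p2 \<noteq> 0\<close> unfolding P by (rule irreducible_linear_poly_imp_coprime)
  have "{(\<zeta>1, \<zeta>2). norm \<zeta>1 = 1 \<and> norm \<zeta>2 = 1 \<and>
                   (\<forall>\<zeta>3. norm \<zeta>3 = 1 \<longrightarrow> eval3 P \<zeta>1 \<zeta>2 \<zeta>3 = 0)}
                 \<subseteq> {(x, y). eval2 p1 x y = 0 \<and> eval2 p2 x y = 0}"
    unfolding P by (auto dest: vertical_line_in_zeros_imp_common_zero)
  then show ?thesis
    by (rule finite_subset) (rule finite_common_zeros_coprime[OF \<open>coprime p1 p2\<close>])
qed

end
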